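(* Let $k\geq3$ be an integer, let $N,M\geq0$ be integers, and let $a_1,\dots,a_N,b_1,\dots,b_M\in\{0,k-1\}$. Let $u=0a_1\cdots a_N$ and $v=(k-1)b_1\cdots b_M$ (words of lengths $N+1$ and $M+1$). For a word $w=w_1\cdots w_L$ over $\{0,k-1\}$ set $$I_w=\left[\sum_{n=1}^L\frac{w_n}{k^n}+\frac{1}{k^{L+1}},\ \sum_{n=1}^L\frac{w_n}{k^n}+\frac{k-1}{k^{L+1}}\right].$$ Then $d_k(a,b)$ takes the same value for all $(a,b)\in I_u\times I_v$.
   Context: $T_k:[0,1)\to[0,1)$ is $T_k(x)=kx\bmod1$; for $0\leq a<b\leq1$, $\mathcal{W}_k(a,b)=\{x\in[0,1)\ :\ T_k^n(x)\notin(a,b)\ \forall n\geq0\}$ and $d_k(a,b)$ is its Hausdorff dimension. (For such $u,v$ one has $I_u\subseteq[0,\frac1k)$ and $I_v\subseteq(\frac{k-1}{k},1)$.) *)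

theory Defs
  imports "HOL-Analysis.Analysis"
begin

definition Tk :: "nat \<Rightarrow> real \<Rightarrow> real" where
  "Tk k x = frac (real k * x)"

definition Wk :: "nat \<Rightarrow> real \<Rightarrow> real \<Rightarrow> real set" where
  "Wk k a b = {x \<in> {0..<1}. \<forall>n. (Tk k ^^ n) x \<notin> {a<..<b}}"

definition hausdorff_premeasure :: "real \<Rightarrow> real \<Rightarrow> real set \<Rightarrow> ennreal" where
  "hausdorff_premeasure s \<delta> E =
     (INF U \<in> {U :: nat \<Rightarrow> real set. E \<subseteq> (\<Union>i. U i) \<and>
                 (\<forall>i. bounded (U i) \<and> diameter (U i) \<le> \<delta>)}.
        (\<Sum>i. ennreal (diameter (U i) powr s)))"

definition hausdorff_measure :: "real \<Rightarrow> real set \<Rightarrow> ennreal" where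
  "hausdorff_measure s E = (SUP \<delta> \<in> {0<..}. hausdorff_premeasure s \<delta> E)"

text \<open>Hausdorff dimension, inf of s > 0 with H^s(E) = 0 (s > 0 avoids the
  convention 0 powr 0 = 0; for subsets of the reals this set is nonempty).\<close>
definition hausdorff_dim :: "real set \<Rightarrow> real" where
  "hausdorff_dim E = Inf {s. s > 0 \<and> hausdorff_measure s E = 0}"

definition dk :: "nat \<Rightarrow> real \<Rightarrow> real \<Rightarrow> real" where
  "dk k a b = hausdorff_dim (Wk k a b)"

definition word_val :: "nat \<Rightarrow> nat list \<Rightarrow> real" where
  "word_val k w = (\<Sum>n=1..length w. real (w ! (n - 1)) / real k ^ n)"

definition Iw :: "nat \<Rightarrow> nat list \<Rightarrow> real set" where
  "Iw k w = {word_val k w + 1 / real k ^ (length w + 1) ..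
             word_val k w + (real k - 1) / real k ^ (length w + 1)}"

end

theory Submission
  imports Defs
begin

text \<open>If \<open>w\<close> is a nonempty word, then \<open>T\<^sub>k\<^sup>|w|\<close> maps \<open>I\<^sub>w\<close> affinely onto the middle interval
  \<open>[1/k, (k-1)/k]\<close>. For \<open>u = 0a\<^sub>1\<dots>a\<^sub>N\<close> and \<open>v = (k-1)b\<^sub>1\<dots>b\<^sub>M\<close> the intervals \<open>I\<^sub>u\<close> and \<open>I\<^sub>v\<close> lie
  left of \<open>1/k\<close> and right of \<open>(k-1)/k\<close> respectively. Let \<open>A = max I\<^sub>u\<close> and \<open>B = min I\<^sub>v\<close>.
  For \<open>a \<in> I\<^sub>u\<close>, \<open>b \<in> I\<^sub>v\<close> an orbit entering \<open>(a,b)\<close> but not \<open>(A,B)\<close> is at a point of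
  \<open>I\<^sub>u \<union> I\<^sub>v\<close>, so a few steps later it lies in \<open>[1/k, (k-1)/k] \<subseteq> (A,B)\<close>. Hence
  \<open>W\<^sub>k(a,b) = W\<^sub>k(A,B)\<close>, and in particular the dimension does not depend on \<open>(a,b)\<close>.\<close>

lemma frac_of_nat_mult_frac: "frac (real k * frac z) = frac (real k * z)"
proof -
  have "real k * z = real k * frac z + of_int (int k * \<lfloor>z\<rfloor>)"
    by (simp add: frac_def algebra_simps)
  then show ?thesis by (metis frac_add_of_int_right)
qed

lemma funpow_Tk:
  assumes "n > 0"
  shows "(Tk k ^^ n) x = frac (real k ^ n * x)"
proof -
  have "(Tk k ^^ Suc m) x = frac (real k ^ Suc m * x)" for m
  proof (induction m)
    case 0
    then show ?case by (simp add: Tk_def)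
  next
    case (Suc m)
    have "(Tk k ^^ Suc (Suc m)) x = frac (real k * frac (real k ^ Suc m * x))"
      by (subst funpow.simps(2)) (simp only: o_apply Suc.IH Tk_def)
    also have "\<dots> = frac (real k ^ Suc (Suc m) * x)"
      by (simp add: frac_of_nat_mult_frac mult.assoc)
    finally show ?case .
  qed
  then show ?thesis using assms by (metis gr0_conv_Suc)
qed

lemma word_val_Cons:
  assumes "k > 0"
  shows "word_val k (d # w) = (real d + word_val k w) / real k"
proof -
  have "word_val k (d # w) = (\<Sum>n=Suc 0..Suc (length w). real ((d # w) ! (n - 1)) / real k ^ n)"
    by (simp add: word_val_def)
  also have "\<dots> = real d / real k
      + (\<Sum>n=Suc 0..length w. real ((d # w) ! (Suc n - 1)) / real k ^ Suc n)"
    by (subst sum.atLeast_Suc_atMost, simp, subst sum.shift_bounds_cl_Suc_ivl, simp)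
  also have "(\<Sum>n=Suc 0..length w. real ((d # w) ! (Suc n - 1)) / real k ^ Suc n)
      = word_val k w / real k"
    by (simp add: word_val_def sum_divide_distrib nth_Cons' mult.commute)
  finally show ?thesis by (simp add: add_divide_distrib)
qed

lemma word_val_scaled_nat:
  assumes "k > 0"
  shows "\<exists>m::nat. real k ^ length w * word_val k w = real m"
proof (induction w)
  case Nil
  then show ?case by (simp add: word_val_def)
next
  case (Cons d w)
  then obtain m where "real k ^ length w * word_val k w = real m" by blast
  then have "real k ^ length (d # w) * word_val k (d # w) = real (d * k ^ length w + m)"
    using assms by (simp add: word_val_Cons field_simps)
  then show ?case by blast
qed

lemma word_val_nonneg: "word_val k w \<ge> 0"
  unfolding word_val_def by (intro sum_nonneg) auto

lemma word_val_le:
  assumes "k > 0" and "set w \<subseteq> {..k - 1}"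
  shows "word_val k w \<le> 1 - 1 / real k ^ length w"
  using assms(2)
proof (induction w)
  case Nil
  then show ?case by (simp add: word_val_def)
next
  case (Cons d w)
  then have "real d \<le> real k - 1" "word_val k w \<le> 1 - 1 / real k ^ length w"
    using assms(1) by (auto simp: of_nat_diff)
  then have "word_val k (d # w) \<le> (real k - 1 + (1 - 1 / real k ^ length w)) / real k"
    using assms(1) by (simp add: word_val_Cons divide_right_mono)
  also have "\<dots> = 1 - 1 / real k ^ length (d # w)"
    using assms(1) by (simp add: field_simps)
  finally show ?case .
qed

lemma Iw_Cons_iff:
  assumes "k > 0"
  shows "x \<in> Iw k (d # w) \<longleftrightarrow> real k * x - real d \<in> Iw k w"
proof -
  have "real k ^ (length (d # w) + 1) = real k * real k ^ (length w + 1)" by simp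
  then have "word_val k (d # w) + c / real k ^ (length (d # w) + 1)
      = (real d + (word_val k w + c / real k ^ (length w + 1))) / real k" for c
    using assms by (simp add: word_val_Cons add_divide_distrib)
  then show ?thesis
    using assms by (simp add: Iw_def pos_divide_le_eq pos_le_divide_eq algebra_simps)
qed

lemma Iw_subset_greaterThan_0:
  assumes "k > 0"
  shows "Iw k w \<subseteq> {0<..}"
proof
  fix x assume "x \<in> Iw k w"
  then have "word_val k w + 1 / real k ^ (length w + 1) \<le> x"
    unfolding Iw_def atLeastAtMost_iff by (rule conjunct1)
  moreover have "1 / real k ^ (length w + 1) > 0" using assms by simp
  ultimately show "x \<in> {0<..}"
    using word_val_nonneg[of k w] unfolding greaterThan_iff by linarith
qed

lemma Iw_subset_lessThan_1:
  assumes "k > 0" and "set w \<subseteq> {..k - 1}"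
  shows "Iw k w \<subseteq> {..<1}"
proof -
  have "(real k - 1) / real k ^ (length w + 1) < 1 / real k ^ length w"
    using assms(1) by (simp add: field_simps)
  then show ?thesis
    using word_val_le[OF assms] by (auto simp: Iw_def)
qed

lemma Iw_Cons_0_subset: "k > 0 \<Longrightarrow> set w \<subseteq> {..k - 1} \<Longrightarrow> Iw k (0 # w) \<subseteq> {..<1 / real k}"
  using Iw_subset_lessThan_1[of k w] by (auto simp: Iw_Cons_iff field_simps)

lemma Iw_Cons_top_subset: "k > 0 \<Longrightarrow> Iw k ((k - 1) # w) \<subseteq> {(real k - 1) / real k<..}"
  using Iw_subset_greaterThan_0[of k w] by (auto simp: Iw_Cons_iff field_simps of_nat_diff)

lemma funpow_Tk_Iw:
  assumes "k > 0" and "w \<noteq> []" and "y \<in> Iw k w"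
  shows "(Tk k ^^ length w) y \<in> {1 / real k .. (real k - 1) / real k}"
proof -
  define L where "L = length w"
  define t where "t = real k ^ L * (y - word_val k w)"
  obtain m :: nat where m: "real k ^ L * word_val k w = real m"
    using word_val_scaled_nat[OF assms(1)] unfolding L_def by blast
  have "1 / real k ^ (L + 1) \<le> y - word_val k w" "y - word_val k w \<le> (real k - 1) / real k ^ (L + 1)"
    using assms(3) by (auto simp: Iw_def L_def)
  then have t: "1 / real k \<le> t" "t \<le> (real k - 1) / real k"
    using assms(1) by (simp_all add: t_def field_simps)
  moreover have "0 < 1 / real k" "(real k - 1) / real k < 1"
    using assms(1) by simp_all
  ultimately have "frac t = t"
    unfolding frac_eq by linarith
  moreover have "real k ^ L * y = t + of_int (int m)"
    using m by (simp add: t_def algebra_simps)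
  ultimately have "frac (real k ^ L * y) = t"
    by (metis frac_add_of_int_right)
  then show ?thesis
    using t funpow_Tk[of L k y] assms(2) by (simp add: L_def)
qed

lemma Wk_eq_if_escape:
  assumes "a \<le> A" and "B \<le> b"
    and escape: "\<And>y. y \<in> {a<..<b} \<Longrightarrow> y \<notin> {A<..<B} \<Longrightarrow> \<exists>n. (Tk k ^^ n) y \<in> {A<..<B}"
  shows "Wk k a b = Wk k A B"
proof
  show "Wk k a b \<subseteq> Wk k A B"
    using assms(1,2) by (auto simp: Wk_def) (meson le_less_trans less_le_trans)
  show "Wk k A B \<subseteq> Wk k a b"
  proof
    fix x assume x: "x \<in> Wk k A B"
    have "(Tk k ^^ n) x \<notin> {a<..<b}" for n
    proof
      assume hit: "(Tk k ^^ n) x \<in> {a<..<b}"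
      moreover have "(Tk k ^^ n) x \<notin> {A<..<B}" using x by (simp add: Wk_def)
      ultimately obtain m where "(Tk k ^^ m) ((Tk k ^^ n) x) \<in> {A<..<B}"
        using escape by blast
      then have "(Tk k ^^ (m + n)) x \<in> {A<..<B}" by (simp add: funpow_add)
      then show False using x unfolding Wk_def by blast
    qed
    then show "x \<in> Wk k a b" using x by (simp add: Wk_def)
  qed
qed

lemma Wk_constant_on_Iw:
  assumes "k \<ge> 2" and "u \<noteq> []" and "v \<noteq> []"
    and u: "Iw k u \<subseteq> {..<1 / real k}" and v: "Iw k v \<subseteq> {(real k - 1) / real k<..}"
  shows "\<exists>A B. \<forall>a \<in> Iw k u. \<forall>b \<in> Iw k v. Wk k a b = Wk k A B"
proof -
  define A where "A = word_val k u + (real k - 1) / real k ^ (length u + 1)"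
  define B where "B = word_val k v + 1 / real k ^ (length v + 1)"
  have "1 \<le> real k - 1" using assms(1) by simp
  then have "A \<in> Iw k u" "B \<in> Iw k v"
    by (auto simp: Iw_def A_def B_def divide_right_mono)
  then have middle: "{1 / real k .. (real k - 1) / real k} \<subseteq> {A<..<B}"
    using u v by fastforce
  have "Wk k a b = Wk k A B" if a: "a \<in> Iw k u" and b: "b \<in> Iw k v" for a b
  proof (rule Wk_eq_if_escape)
    show "a \<le> A" "B \<le> b" using a b by (auto simp: Iw_def A_def B_def)
    fix y assume "y \<in> {a<..<b}" "y \<notin> {A<..<B}"
    then have "y \<in> Iw k u \<or> y \<in> Iw k v"
      using a b by (auto simp: Iw_def A_def B_def)
    then obtain w where "w \<noteq> []" "y \<in> Iw k w" using assms(2,3) by blast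
    then have "(Tk k ^^ length w) y \<in> {A<..<B}"
      using funpow_Tk_Iw[of k w y] middle assms(1) by (meson subsetD zero_less_numeral less_le_trans)
    then show "\<exists>n. (Tk k ^^ n) y \<in> {A<..<B}" ..
  qed
  then show ?thesis by blast
qed

theorem mainTheorem9:
  fixes k :: nat and as bs :: "nat list"
  assumes "k \<ge> 3"
    and "set as \<subseteq> {0, k - 1}" and "set bs \<subseteq> {0, k - 1}"
  shows "\<forall>a b a' b'. a \<in> Iw k (0 # as) \<and> b \<in> Iw k ((k - 1) # bs) \<and>
           a' \<in> Iw k (0 # as) \<and> b' \<in> Iw k ((k - 1) # bs) \<longrightarrow>
           dk k a b = dk k a' b'"
proof -
  have k: "k \<ge> 2" "k > 0" using assms(1) by auto
  have "set as \<subseteq> {..k - 1}" using assms(2) by auto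
  then obtain A B where "\<forall>a \<in> Iw k (0 # as). \<forall>b \<in> Iw k ((k - 1) # bs). Wk k a b = Wk k A B"
    using Wk_constant_on_Iw[OF k(1) _ _ Iw_Cons_0_subset Iw_Cons_top_subset] k(2) by blast
  then show ?thesis by (simp add: dk_def)
qed

end
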